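(* Let $\varphi$ be a bounded, increasing, submodular setfunction on a sigma-algebra $(J,\mathcal{B})$, continuous from above, with $\varphi(\emptyset)=0$. Let $(\mathcal{P}_n\colon n\in\mathbb{N})$ be a refining sequence of partitions of $J$, each into finitely many sets of $\mathcal{B}$, such that $\bigcup_n\mathcal{P}_n$ generates $\mathcal{B}$. Then $\varphi/\mathcal{P}_n\rightarrowtail\varphi$.
   Context: $\varphi$ is increasing if $X\subseteq Y$ implies $\varphi(X)\le\varphi(Y)$, submodular if $\varphi(X)+\varphi(Y)\ge\varphi(X\cap Y)+\varphi(X\cup Y)$, and continuous from above if $\varphi(\bigcap_nX_n)=\lim_n\varphi(X_n)$ for every decreasing sequence $X_1\supseteq X_2\supseteq\dots$ in $\mathcal{B}$. A sequence of partitions is refining if $\mathcal{P}_{n+1}$ refines $\mathcal{P}_n$. For a finite partition $\mathcal{P}$ of $J$ into sets of $\mathcal{B}$, the quotient $\varphi/\mathcal{P}$ is the setfunction on subsets $\mathcal{S}\subseteq\mathcal{P}$ given by $\mathcal{S}\mapsto\varphi(\bigcup\mathcal{S})$. More generally, for a setfunction $\psi$ on a set-algebra $(I,\mathcal{C})$ and a map $F\colon I\to[k]$ with $F^{-1}(i)\in\mathcal{C}$, the quotient $\psi\circ F^{-1}$ is $A\mapsto\psi(F^{-1}(A))$ on $2^{[k]}$, and $Q_k(\psi)\subseteq\mathbb{R}^{2^k}$ is the set of all such quotients. $\psi_n\rightarrowtail\psi$ means that for every $k\in\mathbb{N}$ the Hausdorff distance in Euclidean $\mathbb{R}^{2^k}$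 between $Q_k(\psi_n)$ and $Q_k(\psi)$ tends to $0$. *)

theory Defs
  imports "HOL-Analysis.Analysis"
begin

definition sf_bounded :: "'a set set \<Rightarrow> ('a set \<Rightarrow> real) \<Rightarrow> bool" where
  "sf_bounded B \<phi> \<longleftrightarrow> (\<exists>C. \<forall>X\<in>B. \<bar>\<phi> X\<bar> \<le> C)"

definition sf_increasing :: "'a set set \<Rightarrow> ('a set \<Rightarrow> real) \<Rightarrow> bool" where
  "sf_increasing B \<phi> \<longleftrightarrow> (\<forall>X\<in>B. \<forall>Y\<in>B. X \<subseteq> Y \<longrightarrow> \<phi> X \<le> \<phi> Y)"

definition sf_submodular :: "'a set set \<Rightarrow> ('a set \<Rightarrow> real) \<Rightarrow> bool" where
  "sf_submodular B \<phi> \<longleftrightarrow>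
     (\<forall>X\<in>B. \<forall>Y\<in>B. \<phi> X + \<phi> Y \<ge> \<phi> (X \<inter> Y) + \<phi> (X \<union> Y))"

definition sf_cont_above :: "'a set set \<Rightarrow> ('a set \<Rightarrow> real) \<Rightarrow> bool" where
  "sf_cont_above B \<phi> \<longleftrightarrow>
     (\<forall>X :: nat \<Rightarrow> 'a set. range X \<subseteq> B \<longrightarrow> decseq X \<longrightarrow>
        (\<lambda>n. \<phi> (X n)) \<longlonglongrightarrow> \<phi> (\<Inter>n. X n))"

definition fin_partition :: "'a set \<Rightarrow> 'a set set \<Rightarrow> 'a set set \<Rightarrow> bool" where
  "fin_partition J B P \<longleftrightarrow> finite P \<and> P \<subseteq> B \<and> {} \<notin> P \<and> \<Union>P = J \<and> disjoint P"

definition partition_refines :: "'a set set \<Rightarrow> 'a set set \<Rightarrow> bool" where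
  "partition_refines Q P \<longleftrightarrow> (\<forall>X\<in>Q. \<exists>Y\<in>P. X \<subseteq> Y)"

text \<open>Quotient phi/P: setfunction on subsets of P.\<close>
definition sf_quot :: "('a set \<Rightarrow> real) \<Rightarrow> 'a set set \<Rightarrow> real" where
  "sf_quot \<phi> S = \<phi> (\<Union>S)"

text \<open>Q_k(psi) for psi on the set-algebra (I,C); [k] = {0..<k}; a point of R^(2^k)
  is a function on subsets of [k] (extended by 0 outside Pow [k]).\<close>
definition Qk :: "nat \<Rightarrow> 'i set \<Rightarrow> 'i set set \<Rightarrow> ('i set \<Rightarrow> real) \<Rightarrow> (nat set \<Rightarrow> real) set" where
  "Qk k I C \<psi> = {(\<lambda>A. if A \<subseteq> {..<k} then \<psi> {x\<in>I. F x \<in> A} else 0) | F.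
       (\<forall>x\<in>I. F x < k) \<and> (\<forall>i<k. {x\<in>I. F x = i} \<in> C)}"

definition eucl_k :: "nat \<Rightarrow> (nat set \<Rightarrow> real) \<Rightarrow> (nat set \<Rightarrow> real) \<Rightarrow> real" where
  "eucl_k k f g = sqrt (\<Sum>A\<in>Pow {..<k}. (f A - g A)^2)"

definition hausdist_k :: "nat \<Rightarrow> (nat set \<Rightarrow> real) set \<Rightarrow> (nat set \<Rightarrow> real) set \<Rightarrow> ereal" where
  "hausdist_k k S T = Inf {ereal e | e. e \<ge> 0 \<and>
      (\<forall>x\<in>S. \<exists>y\<in>T. eucl_k k x y \<le> e) \<and> (\<forall>y\<in>T. \<exists>x\<in>S. eucl_k k x y \<le> e)}"

definition quot_conv ::
  "(nat \<Rightarrow> 'i set) \<Rightarrow> (nat \<Rightarrow> 'i set set) \<Rightarrow> (nat \<Rightarrow> 'i set \<Rightarrow> real) \<Rightarrow>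
   'j set \<Rightarrow> 'j set set \<Rightarrow> ('j set \<Rightarrow> real) \<Rightarrow> bool" where
  "quot_conv In Cn \<psi>n I C \<psi> \<longleftrightarrow>
     (\<forall>k. (\<lambda>n. hausdist_k k (Qk k (In n) (Cn n) (\<psi>n n)) (Qk k I C \<psi>)) \<longlonglongrightarrow> 0)"

end

(* The quotient of phi by a finite partition P has the same points in R^(2^k) as phi restricted to
   the finite algebra of unions of blocks of P, and along a refining sequence these algebras increase
   to an algebra generating B.  For an increasing, submodular phi with phi {} = 0, phi of the
   symmetric difference is a pseudometric on B, and continuity from above makes the sets that can be
   approximated from the generating algebra a sigma-algebra, hence all of B.  Approximating the
   level sets of a B-measurable labelling F of J by [k] thus yields, for large n, labellings measurable
   for the n-th algebra whose quotients are uniformly close to that of F.  The points of Q_k(phi) are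
   bounded by phi J, so finitely many of them form an epsilon-net, and pointwise approximation
   becomes convergence in Hausdorff distance. *)

theory Submission
  imports Defs
begin

lemma abs_diff_less_of_floor_divide_eq:
  fixes a b \<delta> :: real
  assumes "\<lfloor>a / \<delta>\<rfloor> = \<lfloor>b / \<delta>\<rfloor>" "\<delta> > 0"
  shows "\<bar>a - b\<bar> < \<delta>"
proof -
  have "\<bar>a / \<delta> - b / \<delta>\<bar> < 1"
    using floor_correct[of "a / \<delta>"] floor_correct[of "b / \<delta>"] assms(1) by linarith
  also have "\<bar>a / \<delta> - b / \<delta>\<bar> = \<bar>a - b\<bar> / \<delta>"
    using assms(2) by (simp add: diff_divide_distrib[symmetric] abs_divide)
  finally show ?thesis
    using assms(2) by (simp add: pos_divide_less_eq)
qed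

lemma floor_divide_mem_ceiling_interval:
  fixes a c \<delta> :: real
  assumes "\<bar>a\<bar> \<le> c" "\<delta> > 0"
  shows "\<lfloor>a / \<delta>\<rfloor> \<in> {-\<lceil>c / \<delta>\<rceil>..\<lceil>c / \<delta>\<rceil>}"
proof -
  have "- (c / \<delta>) \<le> a / \<delta>" "a / \<delta> \<le> c / \<delta>"
    using assms divide_right_mono[of _ _ \<delta>] unfolding abs_le_iff by fastforce+
  moreover have "c / \<delta> \<le> of_int \<lceil>c / \<delta>\<rceil>"
    by (rule le_of_int_ceiling)
  ultimately show ?thesis
    unfolding atLeastAtMost_iff le_floor_iff floor_le_iff by linarith
qed

lemma finite_net:
  fixes T :: "(nat set \<Rightarrow> real) set"
  assumes bound: "\<And>y A. y \<in> T \<Longrightarrow> A \<subseteq> {..<k} \<Longrightarrow> \<bar>y A\<bar> \<le> c" and "\<delta> > 0"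
  shows "\<exists>R. finite R \<and> R \<subseteq> T \<and> (\<forall>y\<in>T. \<exists>r\<in>R. \<forall>A\<subseteq>{..<k}. \<bar>y A - r A\<bar> \<le> \<delta>)"
proof -
  define rd where "rd y = (\<lambda>A. if A \<subseteq> {..<k} then \<lfloor>y A / \<delta>\<rfloor> else 0)" for y :: "nat set \<Rightarrow> real"
  define M where "M = \<lceil>c / \<delta>\<rceil>"
  have "rd y A \<in> {-M..M}" if "y \<in> T" for y A
  proof (cases "A \<subseteq> {..<k}")
    case True
    then show ?thesis
      using floor_divide_mem_ceiling_interval[OF bound[OF that True] \<open>\<delta> > 0\<close>]
      unfolding rd_def M_def by simp
  next
    case False
    have "0 \<le> c / \<delta>"
      using bound[OF that, of "{}"] \<open>\<delta> > 0\<close> by auto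
    then show ?thesis
      using False unfolding rd_def M_def by simp
  qed
  then have "rd ` T \<subseteq> {g. \<forall>A. (A \<in> Pow {..<k} \<longrightarrow> g A \<in> {-M..M}) \<and> (A \<notin> Pow {..<k} \<longrightarrow> g A = 0)}"
    unfolding rd_def by (auto split: if_split_asm)
  then have "finite (rd ` T)"
    using finite_set_of_finite_funs[of "Pow {..<k}" "{-M..M}" 0] finite_subset by auto
  moreover have "\<exists>r\<in>inv_into T rd ` rd ` T. \<forall>A\<subseteq>{..<k}. \<bar>y A - r A\<bar> \<le> \<delta>" if "y \<in> T" for y
  proof (intro bexI[of _ "inv_into T rd (rd y)"] allI impI)
    fix A assume "A \<subseteq> {..<k}"
    moreover have "rd (inv_into T rd (rd y)) = rd y"
      using that by (simp add: f_inv_into_f)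
    ultimately have "\<lfloor>inv_into T rd (rd y) A / \<delta>\<rfloor> = \<lfloor>y A / \<delta>\<rfloor>"
      unfolding rd_def by meson
    then show "\<bar>y A - inv_into T rd (rd y) A\<bar> \<le> \<delta>"
      using abs_diff_less_of_floor_divide_eq \<open>\<delta> > 0\<close> by (metis abs_minus_commute less_imp_le)
  qed (use that in auto)
  moreover have "inv_into T rd ` rd ` T \<subseteq> T"
    by (auto intro: inv_into_into)
  ultimately show ?thesis
    by blast
qed

lemma eucl_k_le:
  assumes "\<delta> \<ge> 0" "\<And>A. A \<subseteq> {..<k} \<Longrightarrow> \<bar>f A - g A\<bar> \<le> \<delta>"
  shows "eucl_k k f g \<le> sqrt (2 ^ k) * \<delta>"
proof -
  have "(\<Sum>A\<in>Pow {..<k}. (f A - g A)\<^sup>2) \<le> (\<Sum>A\<in>Pow {..<k}. \<delta>\<^sup>2)"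
    using assms by (intro sum_mono) (simp add: abs_le_square_iff[symmetric])
  also have "\<dots> = 2 ^ k * \<delta>\<^sup>2"
    by (simp add: card_Pow)
  finally have "eucl_k k f g \<le> sqrt (2 ^ k * \<delta>\<^sup>2)"
    unfolding eucl_k_def by (rule real_sqrt_le_mono)
  then show ?thesis
    using assms(1) by (simp add: real_sqrt_mult)
qed

lemma hausdist_k_nonneg: "0 \<le> hausdist_k k S T"
  unfolding hausdist_k_def by (rule Inf_greatest) auto

lemma hausdist_k_le_of_subset:
  assumes "S \<subseteq> T" "\<delta> \<ge> 0" "\<And>y. y \<in> T \<Longrightarrow> \<exists>x\<in>S. \<forall>A\<subseteq>{..<k}. \<bar>x A - y A\<bar> \<le> \<delta>"
  shows "hausdist_k k S T \<le> ereal (sqrt (2 ^ k) * \<delta>)"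
proof -
  have "\<exists>y\<in>T. eucl_k k x y \<le> sqrt (2 ^ k) * \<delta>" if "x \<in> S" for x
    using that assms(1,2) by (intro bexI[of _ x]) (auto simp: eucl_k_def)
  moreover have "\<exists>x\<in>S. eucl_k k x y \<le> sqrt (2 ^ k) * \<delta>" if "y \<in> T" for y
    using assms(3)[OF that] eucl_k_le[OF assms(2)] by blast
  ultimately show ?thesis
    unfolding hausdist_k_def using assms(2) by (intro Inf_lower) auto
qed

lemma hausdist_k_le_of_net:
  assumes "S \<subseteq> T" "\<delta> \<ge> 0"
    and "\<forall>y\<in>T. \<exists>r\<in>R. \<forall>A\<subseteq>{..<k}. \<bar>y A - r A\<bar> \<le> \<delta>"
    and "\<forall>r\<in>R. \<exists>x\<in>S. \<forall>A\<subseteq>{..<k}. \<bar>x A - r A\<bar> \<le> \<delta>"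
  shows "hausdist_k k S T \<le> ereal (sqrt (2 ^ k) * (2 * \<delta>))"
proof (rule hausdist_k_le_of_subset[OF assms(1)])
  fix y assume "y \<in> T"
  then obtain r x where r: "\<forall>A\<subseteq>{..<k}. \<bar>y A - r A\<bar> \<le> \<delta>"
    and x: "x \<in> S" "\<forall>A\<subseteq>{..<k}. \<bar>x A - r A\<bar> \<le> \<delta>"
    using assms(3,4) by blast
  have "\<bar>x A - y A\<bar> \<le> 2 * \<delta>" if "A \<subseteq> {..<k}" for A
  proof -
    have "\<bar>y A - r A\<bar> \<le> \<delta>" "\<bar>x A - r A\<bar> \<le> \<delta>"
      using r x(2) that by blast+
    then show ?thesis
      by linarith
  qed
  with x(1) show "\<exists>x\<in>S. \<forall>A\<subseteq>{..<k}. \<bar>x A - y A\<bar> \<le> 2 * \<delta>"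
    by blast
qed (use assms(2) in simp)

lemma ereal_tendsto_0_of_eventually_le:
  fixes f :: "nat \<Rightarrow> ereal"
  assumes "\<And>n. 0 \<le> f n" "\<And>e. e > 0 \<Longrightarrow> eventually (\<lambda>n. f n \<le> ereal e) sequentially"
  shows "f \<longlonglongrightarrow> 0"
proof (rule order_tendstoI)
  fix a :: ereal assume "a < 0"
  then show "eventually (\<lambda>n. a < f n) sequentially"
    by (intro always_eventually allI) (rule less_le_trans[OF _ assms(1)])
next
  fix a :: ereal assume "0 < a"
  then obtain e where "0 < ereal e" "ereal e < a"
    using ereal_dense2[OF \<open>0 < a\<close>] by blast
  then have "eventually (\<lambda>n. f n \<le> ereal e) sequentially"
    using assms(2) by simp
  then show "eventually (\<lambda>n. f n < a) sequentially"
    by (rule eventually_mono) (rule le_less_trans[OF _ \<open>ereal e < a\<close>])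
qed

lemma hausdist_k_tendsto_0:
  fixes S :: "nat \<Rightarrow> (nat set \<Rightarrow> real) set"
  assumes sub: "\<And>n. S n \<subseteq> T" and bound: "\<And>y A. y \<in> T \<Longrightarrow> A \<subseteq> {..<k} \<Longrightarrow> \<bar>y A\<bar> \<le> c"
    and approx: "\<And>y e. y \<in> T \<Longrightarrow> e > 0 \<Longrightarrow>
      eventually (\<lambda>n. \<exists>x\<in>S n. \<forall>A\<subseteq>{..<k}. \<bar>x A - y A\<bar> \<le> e) sequentially"
  shows "(\<lambda>n. hausdist_k k (S n) T) \<longlonglongrightarrow> 0"
proof (rule ereal_tendsto_0_of_eventually_le[OF hausdist_k_nonneg])
  fix e :: real assume "e > 0"
  define \<delta> where "\<delta> = e / (2 * sqrt (2 ^ k))"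
  have "\<delta> > 0" "sqrt (2 ^ k) * (2 * \<delta>) = e"
    using \<open>e > 0\<close> unfolding \<delta>_def by simp_all
  have "\<exists>R. finite R \<and> R \<subseteq> T \<and> (\<forall>y\<in>T. \<exists>r\<in>R. \<forall>A\<subseteq>{..<k}. \<bar>y A - r A\<bar> \<le> \<delta>)"
    by (intro finite_net[of T k c] bound \<open>\<delta> > 0\<close>)
  then obtain R where R: "finite R" "R \<subseteq> T" "\<forall>y\<in>T. \<exists>r\<in>R. \<forall>A\<subseteq>{..<k}. \<bar>y A - r A\<bar> \<le> \<delta>"
    by blast
  have "eventually (\<lambda>n. \<forall>r\<in>R. \<exists>x\<in>S n. \<forall>A\<subseteq>{..<k}. \<bar>x A - r A\<bar> \<le> \<delta>) sequentially"
    using R(2) approx[OF _ \<open>\<delta> > 0\<close>] by (intro eventually_ball_finite[OF R(1)]) blast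
  then show "eventually (\<lambda>n. hausdist_k k (S n) T \<le> ereal e) sequentially"
  proof (rule eventually_mono)
    fix n assume "\<forall>r\<in>R. \<exists>x\<in>S n. \<forall>A\<subseteq>{..<k}. \<bar>x A - r A\<bar> \<le> \<delta>"
    then have "hausdist_k k (S n) T \<le> ereal (sqrt (2 ^ k) * (2 * \<delta>))"
      using sub R(3) \<open>\<delta> > 0\<close> by (intro hausdist_k_le_of_net) auto
    then show "hausdist_k k (S n) T \<le> ereal e"
      using \<open>sqrt (2 ^ k) * (2 * \<delta>) = e\<close> by simp
  qed
qed

definition quot_point :: "nat \<Rightarrow> 'i set \<Rightarrow> ('i set \<Rightarrow> real) \<Rightarrow> ('i \<Rightarrow> nat) \<Rightarrow> nat set \<Rightarrow> real"
  where "quot_point k I \<psi> F = (\<lambda>A. if A \<subseteq> {..<k} then \<psi> {x\<in>I. F x \<in> A} else 0)"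

definition labelling :: "nat \<Rightarrow> 'i set \<Rightarrow> 'i set set \<Rightarrow> ('i \<Rightarrow> nat) \<Rightarrow> bool"
  where "labelling k I C F \<longleftrightarrow> (\<forall>x\<in>I. F x < k) \<and> (\<forall>i<k. {x\<in>I. F x = i} \<in> C)"

lemma Qk_eq_image: "Qk k I C \<psi> = quot_point k I \<psi> ` Collect (labelling k I C)"
  unfolding Qk_def quot_point_def labelling_def by auto

lemma Qk_mono: "C \<subseteq> D \<Longrightarrow> Qk k I C \<psi> \<subseteq> Qk k I D \<psi>"
  unfolding Qk_def by blast

lemma (in ring_of_sets) labelling_preimage_in_sets:
  assumes "labelling k I M F" "A \<subseteq> {..<k}"
  shows "{x\<in>I. F x \<in> A} \<in> M"
proof -
  have "{x\<in>I. F x \<in> A} = (\<Union>i\<in>A. {x\<in>I. F x = i})"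
    by auto
  moreover have "{x\<in>I. F x = i} \<in> M" if "i \<in> A" for i
    using assms that unfolding labelling_def by auto
  moreover have "finite A"
    using assms(2) finite_subset by blast
  ultimately show ?thesis
    by auto
qed

lemma Least_nat_eq_iff:
  fixes P :: "nat \<Rightarrow> bool"
  assumes "P n"
  shows "(LEAST i. P i) = m \<longleftrightarrow> P m \<and> (\<forall>i<m. \<not> P i)"
  using assms by (metis LeastI Least_equality not_less not_less_Least)

lemma Least_last_or_eq:
  fixes P :: "nat \<Rightarrow> bool"
  assumes "m < k" "\<And>i. i < k \<Longrightarrow> P i \<longleftrightarrow> i = m"
  shows "(LEAST i. i = k - 1 \<or> P i) = m"
proof (rule Least_equality)
  show "m = k - 1 \<or> P m"
    using assms by blast
  show "m \<le> i" if "i = k - 1 \<or> P i" for i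
    using that assms by (cases "i < k") auto
qed

lemma (in algebra) labelling_Least:
  assumes "\<And>i. i < k \<Longrightarrow> Y i \<in> M" "\<And>x. x \<in> \<Omega> \<Longrightarrow> \<exists>i<k. x \<in> Y i"
  shows "labelling k \<Omega> M (\<lambda>x. LEAST i. x \<in> Y i)"
  unfolding labelling_def
proof (intro conjI ballI allI impI)
  fix x assume "x \<in> \<Omega>"
  then obtain i where "i < k" "x \<in> Y i"
    using assms(2) by blast
  then show "(LEAST i. x \<in> Y i) < k"
    using Least_le[of "\<lambda>i. x \<in> Y i" i] by linarith
next
  fix i assume "i < k"
  have "(LEAST i. x \<in> Y i) = i \<longleftrightarrow> x \<in> Y i \<and> (\<forall>i'<i. x \<notin> Y i')" if x: "x \<in> \<Omega>" for x
  proof -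
    obtain n where "x \<in> Y n"
      using assms(2)[OF x] by blast
    then show ?thesis
      by (rule Least_nat_eq_iff)
  qed
  then have "{x\<in>\<Omega>. (LEAST i. x \<in> Y i) = i} = \<Omega> \<inter> Y i - (\<Union>i'<i. Y i')"
    by blast
  then show "{x\<in>\<Omega>. (LEAST i. x \<in> Y i) = i} \<in> M"
    using assms(1) \<open>i < k\<close> by (auto intro!: Diff finite_UN)
qed

definition block_unions :: "'a set set \<Rightarrow> 'a set set"
  where "block_unions P = {\<Union>S | S. S \<subseteq> P}"

lemma block_in_block_unions: "Z \<in> P \<Longrightarrow> Z \<in> block_unions P"
  unfolding block_unions_def by (auto intro!: exI[of _ "{Z}"])

lemma block_unions_dichotomy:
  assumes "disjoint P" "Z \<in> P" "Y \<in> block_unions P"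
  shows "Z \<subseteq> Y \<or> Z \<inter> Y = {}"
proof -
  obtain S where "S \<subseteq> P" "Y = \<Union>S"
    using assms(3) unfolding block_unions_def by auto
  then show ?thesis
    using assms(1,2) by (auto dest: disjointD)
qed

lemma algebra_block_unions:
  assumes "\<Union>P = J" "disjoint P"
  shows "algebra J (block_unions P)"
  unfolding algebra_iff_Un
proof (intro conjI ballI)
  show "block_unions P \<subseteq> Pow J" "{} \<in> block_unions P"
    using assms(1) unfolding block_unions_def by auto
next
  fix Y assume "Y \<in> block_unions P"
  then obtain S where S: "S \<subseteq> P" "Y = \<Union>S"
    unfolding block_unions_def by auto
  have "J - Y = \<Union>(P - S)"
    using assms S by (auto dest: disjointD)
  then show "J - Y \<in> block_unions P"
    unfolding block_unions_def by blast
next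
  fix X Y assume "X \<in> block_unions P" "Y \<in> block_unions P"
  then obtain S T where "S \<subseteq> P" "T \<subseteq> P" "X \<union> Y = \<Union>(S \<union> T)"
    unfolding block_unions_def by auto
  then show "X \<union> Y \<in> block_unions P"
    unfolding block_unions_def by blast
qed

lemma (in ring_of_sets) block_unions_subset:
  "finite P \<Longrightarrow> P \<subseteq> M \<Longrightarrow> block_unions P \<subseteq> M"
  unfolding block_unions_def by (auto dest: finite_subset)

lemma block_unions_refines:
  assumes "partition_refines Q P" "\<Union>P \<subseteq> \<Union>Q" "disjoint P"
  shows "block_unions P \<subseteq> block_unions Q"
proof
  fix Y assume Y: "Y \<in> block_unions P"
  have "Y \<subseteq> \<Union>{Z\<in>Q. Z \<subseteq> Y}"
  proof
    fix j assume "j \<in> Y"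
    moreover have "Y \<subseteq> \<Union>Q"
      using Y assms(2) unfolding block_unions_def by auto
    ultimately obtain Z W where "Z \<in> Q" "j \<in> Z" "W \<in> P" "Z \<subseteq> W"
      using assms(1) unfolding partition_refines_def by blast
    moreover have "W \<subseteq> Y"
      using block_unions_dichotomy[OF assms(3) \<open>W \<in> P\<close> Y] \<open>j \<in> Y\<close> \<open>j \<in> Z\<close> \<open>Z \<subseteq> W\<close> by blast
    ultimately show "j \<in> \<Union>{Z\<in>Q. Z \<subseteq> Y}"
      by blast
  qed
  then have "Y = \<Union>{Z\<in>Q. Z \<subseteq> Y}"
    by blast
  then show "Y \<in> block_unions Q"
    unfolding block_unions_def by blast
qed

lemma level_sets_blockwise:
  assumes "\<Union>P = J" "\<And>Z j. Z \<in> P \<Longrightarrow> j \<in> Z \<Longrightarrow> G j = F Z"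
  shows "{j\<in>J. G j \<in> A} = \<Union>{Z\<in>P. F Z \<in> A}"
  using assms by auto

lemma quot_point_sf_quot_blockwise:
  assumes "\<Union>P = J" "\<And>Z j. Z \<in> P \<Longrightarrow> j \<in> Z \<Longrightarrow> G j = F Z"
  shows "quot_point k P (sf_quot \<psi>) F = quot_point k J \<psi> G"
  unfolding quot_point_def sf_quot_def by (simp only: level_sets_blockwise[OF assms])

lemma Qk_sf_quot_subset:
  assumes "\<Union>P = J" "disjoint P"
  shows "Qk k P (Pow P) (sf_quot \<psi>) \<subseteq> Qk k J (block_unions P) \<psi>"
proof
  fix x assume "x \<in> Qk k P (Pow P) (sf_quot \<psi>)"
  then obtain F where F: "labelling k P (Pow P) F" and x: "x = quot_point k P (sf_quot \<psi>) F"
    unfolding Qk_eq_image by auto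
  define G where "G j = F (SOME Z. Z \<in> P \<and> j \<in> Z)" for j
  have blockwise: "G j = F Z" if "Z \<in> P" "j \<in> Z" for Z j
  proof -
    have "(SOME Z. Z \<in> P \<and> j \<in> Z) = Z"
      using that assms(2) by (intro some_equality) (auto dest: disjointD)
    then show ?thesis
      unfolding G_def by simp
  qed
  have "labelling k J (block_unions P) G"
    using F blockwise level_sets_blockwise[OF assms(1) blockwise, where A = "{_}"] assms(1)
    unfolding labelling_def block_unions_def by auto
  moreover have "x = quot_point k J \<psi> G"
    unfolding x by (rule quot_point_sf_quot_blockwise[OF assms(1) blockwise])
  ultimately show "x \<in> Qk k J (block_unions P) \<psi>"
    unfolding Qk_eq_image by blast
qed

lemma block_unions_Qk_subset:
  assumes "\<Union>P = J" "disjoint P" "{} \<notin> P"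
  shows "Qk k J (block_unions P) \<psi> \<subseteq> Qk k P (Pow P) (sf_quot \<psi>)"
proof
  fix x assume "x \<in> Qk k J (block_unions P) \<psi>"
  then obtain G where G: "labelling k J (block_unions P) G" and x: "x = quot_point k J \<psi> G"
    unfolding Qk_eq_image by auto
  define F where "F Z = G (SOME j. j \<in> Z)" for Z
  have blockwise: "G j = F Z" if "Z \<in> P" "j \<in> Z" for Z j
  proof -
    define j0 where "j0 = (SOME j. j \<in> Z)"
    have "j0 \<in> Z"
      unfolding j0_def using that(2) by (rule someI)
    then have "j0 \<in> J"
      using that(1) assms(1) by auto
    then have "{i\<in>J. G i = G j0} \<in> block_unions P"
      using G unfolding labelling_def by auto
    then have "Z \<subseteq> {i\<in>J. G i = G j0}"
      using block_unions_dichotomy[OF assms(2) that(1)] \<open>j0 \<in> Z\<close> \<open>j0 \<in> J\<close> by blast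
    then show ?thesis
      unfolding F_def j0_def[symmetric] using that(2) by blast
  qed
  have "F Z < k" if "Z \<in> P" for Z
  proof -
    obtain j where "j \<in> Z"
      using \<open>Z \<in> P\<close> assms(3) by fastforce
    then show ?thesis
      using G \<open>Z \<in> P\<close> assms(1) blockwise unfolding labelling_def by (metis UnionI)
  qed
  then have "labelling k P (Pow P) F"
    unfolding labelling_def by auto
  moreover have "x = quot_point k P (sf_quot \<psi>) F"
    unfolding x by (rule quot_point_sf_quot_blockwise[OF assms(1) blockwise, symmetric])
  ultimately show "x \<in> Qk k P (Pow P) (sf_quot \<psi>)"
    unfolding Qk_eq_image by blast
qed

lemma Qk_sf_quot:
  assumes "\<Union>P = J" "disjoint P" "{} \<notin> P"
  shows "Qk k P (Pow P) (sf_quot \<psi>) = Qk k J (block_unions P) \<psi>"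
  using Qk_sf_quot_subset[OF assms(1,2)] block_unions_Qk_subset[OF assms] by (rule antisym)

lemma algebra_UN_incseq:
  assumes "incseq C" "\<And>n. algebra \<Omega> (C n)"
  shows "algebra \<Omega> (\<Union>n. C n)"
  unfolding algebra_iff_Un
proof (intro conjI ballI)
  show "(\<Union>n. C n) \<subseteq> Pow \<Omega>" "{} \<in> (\<Union>n. C n)"
    using assms(2) unfolding algebra_iff_Un by blast+
next
  fix X assume "X \<in> (\<Union>n. C n)"
  then show "\<Omega> - X \<in> (\<Union>n. C n)"
    using assms(2) unfolding algebra_iff_Un by blast
next
  fix X Y assume "X \<in> (\<Union>n. C n)" "Y \<in> (\<Union>n. C n)"
  then obtain m n where "X \<in> C m" "Y \<in> C n"
    by blast
  then have "X \<in> C (max m n)" "Y \<in> C (max m n)"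
    using monoD[OF assms(1), of m "max m n"] monoD[OF assms(1), of n "max m n"] by auto
  then show "X \<union> Y \<in> (\<Union>n. C n)"
    using assms(2) unfolding algebra_iff_Un by blast
qed

locale capacity = sigma_algebra J B for J :: "'a set" and B +
  fixes \<phi> :: "'a set \<Rightarrow> real"
  assumes increasing: "sf_increasing B \<phi>" and submodular: "sf_submodular B \<phi>"
    and cont_above: "sf_cont_above B \<phi>" and empty_eq_0: "\<phi> {} = 0"
begin

lemma mono: "X \<in> B \<Longrightarrow> Y \<in> B \<Longrightarrow> X \<subseteq> Y \<Longrightarrow> \<phi> X \<le> \<phi> Y"
  using increasing unfolding sf_increasing_def by blast

lemma nonneg: "X \<in> B \<Longrightarrow> 0 \<le> \<phi> X"
  using mono[of "{}" X] empty_eq_0 by simp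

lemma le_space: "X \<in> B \<Longrightarrow> \<phi> X \<le> \<phi> J"
  using mono sets_into_space by blast

lemma subadditive: "X \<in> B \<Longrightarrow> Y \<in> B \<Longrightarrow> \<phi> (X \<union> Y) \<le> \<phi> X + \<phi> Y"
  using submodular nonneg[of "X \<inter> Y"] unfolding sf_submodular_def by force

lemma finite_subadditive:
  "finite I \<Longrightarrow> (\<And>i. i \<in> I \<Longrightarrow> X i \<in> B) \<Longrightarrow> \<phi> (\<Union>i\<in>I. X i) \<le> (\<Sum>i\<in>I. \<phi> (X i))"
proof (induction I rule: finite_induct)
  case empty
  then show ?case
    using empty_eq_0 by simp
next
  case (insert i I)
  then have "\<phi> (X i \<union> (\<Union>j\<in>I. X j)) \<le> \<phi> (X i) + \<phi> (\<Union>j\<in>I. X j)"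
    by (intro subadditive) auto
  then show ?case
    using insert by simp
qed

lemma sym_diff_triangle:
  assumes "X \<in> B" "Y \<in> B" "Z \<in> B"
  shows "\<phi> (sym_diff X Z) \<le> \<phi> (sym_diff X Y) + \<phi> (sym_diff Y Z)"
proof -
  have "\<phi> (sym_diff X Z) \<le> \<phi> (sym_diff X Y \<union> sym_diff Y Z)"
    using assms by (intro mono) auto
  also have "\<dots> \<le> \<phi> (sym_diff X Y) + \<phi> (sym_diff Y Z)"
    using assms by (intro subadditive) auto
  finally show ?thesis .
qed

lemma abs_diff_le_sym_diff:
  assumes "X \<in> B" "Y \<in> B"
  shows "\<bar>\<phi> X - \<phi> Y\<bar> \<le> \<phi> (sym_diff X Y)"
  using sym_diff_triangle[of X Y "{}"] sym_diff_triangle[of Y X "{}"] assms empty_eq_0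
  by (simp add: Un_commute)

definition approximable :: "'a set set \<Rightarrow> 'a set \<Rightarrow> bool"
  where "approximable A X \<longleftrightarrow> (\<forall>e>0. \<exists>Y\<in>A. \<phi> (sym_diff X Y) < e)"

lemma tendsto_Diff_UN_lessThan:
  assumes "range X \<subseteq> B"
  shows "(\<lambda>M. \<phi> ((\<Union>i. X i) - (\<Union>i<M. X i))) \<longlonglongrightarrow> 0"
proof -
  have "(\<Inter>M. (\<Union>i. X i) - (\<Union>i<M. X i)) = {}"
    by (blast intro: lessI)
  moreover have "decseq (\<lambda>M. (\<Union>i. X i) - (\<Union>i<M. X i))"
    unfolding decseq_def by auto
  moreover have "range (\<lambda>M. (\<Union>i. X i) - (\<Union>i<M. X i)) \<subseteq> B"
    using assms by (intro image_subsetI Diff countable_UN finite_UN) auto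
  ultimately show ?thesis
    using cont_above empty_eq_0 unfolding sf_cont_above_def by metis
qed

lemma approximable_Un:
  assumes "algebra J A" "A \<subseteq> B" "X \<in> B" "X' \<in> B" "approximable A X" "approximable A X'"
  shows "approximable A (X \<union> X')"
  unfolding approximable_def
proof (intro allI impI)
  fix e :: real assume "e > 0"
  then obtain Y Y' where Y: "Y \<in> A" "\<phi> (sym_diff X Y) < e / 2" and Y': "Y' \<in> A" "\<phi> (sym_diff X' Y') < e / 2"
    using assms(5,6) unfolding approximable_def by (meson half_gt_zero)
  have "\<phi> (sym_diff (X \<union> X') (Y \<union> Y')) \<le> \<phi> (sym_diff X Y \<union> sym_diff X' Y')"
    using assms Y Y' by (intro mono) auto
  also have "\<dots> \<le> \<phi> (sym_diff X Y) + \<phi> (sym_diff X' Y')"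
    using assms Y Y' by (intro subadditive) auto
  finally have "\<phi> (sym_diff (X \<union> X') (Y \<union> Y')) < e"
    using Y Y' by linarith
  moreover have "Y \<union> Y' \<in> A"
    using assms(1) Y Y' unfolding algebra_iff_Un by blast
  ultimately show "\<exists>Z\<in>A. \<phi> (sym_diff (X \<union> X') Z) < e"
    by blast
qed

lemma approximable_Diff_space:
  assumes "algebra J A" "X \<subseteq> J" "approximable A X"
  shows "approximable A (J - X)"
  unfolding approximable_def
proof (intro allI impI)
  fix e :: real assume "e > 0"
  then obtain Y where "Y \<in> A" "\<phi> (sym_diff X Y) < e"
    using assms(3) unfolding approximable_def by blast
  moreover have "Y \<subseteq> J" "J - Y \<in> A"
    using assms(1) \<open>Y \<in> A\<close> unfolding algebra_iff_Un by auto
  moreover have "sym_diff (J - X) (J - Y) = sym_diff X Y"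
    using assms(2) \<open>Y \<subseteq> J\<close> by blast
  ultimately show "\<exists>Z\<in>A. \<phi> (sym_diff (J - X) Z) < e"
    by metis
qed

lemma approximable_closed:
  assumes "A \<subseteq> B" "X \<in> B" "\<And>e. e > 0 \<Longrightarrow> \<exists>Y\<in>B. approximable A Y \<and> \<phi> (sym_diff X Y) < e"
  shows "approximable A X"
  unfolding approximable_def
proof (intro allI impI)
  fix e :: real assume "e > 0"
  then obtain Y where Y: "Y \<in> B" "approximable A Y" "\<phi> (sym_diff X Y) < e / 2"
    using assms(3) half_gt_zero by blast
  then obtain Z where Z: "Z \<in> A" "\<phi> (sym_diff Y Z) < e / 2"
    using \<open>e > 0\<close> unfolding approximable_def by (meson half_gt_zero)
  have "\<phi> (sym_diff X Z) \<le> \<phi> (sym_diff X Y) + \<phi> (sym_diff Y Z)"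
    using assms(1,2) Y Z by (intro sym_diff_triangle) auto
  then show "\<exists>Z\<in>A. \<phi> (sym_diff X Z) < e"
    using Y Z by (intro bexI[of _ Z]) auto
qed

lemma approximable_self: "X \<in> A \<Longrightarrow> approximable A X"
  using empty_eq_0 unfolding approximable_def by (auto intro!: bexI[of _ X])

lemma approximable_UN:
  fixes X :: "nat \<Rightarrow> 'a set"
  assumes "algebra J A" "A \<subseteq> B" "\<And>i. X i \<in> B" "\<And>i. approximable A (X i)"
  shows "approximable A (\<Union>i. X i)"
proof (rule approximable_closed[OF assms(2)])
  have finite_unions: "approximable A (\<Union>i<M. X i)" for M
  proof (induction M)
    case 0
    then show ?case
      using assms(1) approximable_self unfolding algebra_iff_Un by auto
  next
    case (Suc M)
    have "(\<Union>i<M. X i) \<in> B"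
      using assms(3) by auto
    then have "approximable A ((\<Union>i<M. X i) \<union> X M)"
      using approximable_Un[OF assms(1,2)] Suc.IH assms(3,4) by blast
    then show ?case
      by (simp add: lessThan_Suc Un_commute)
  qed
  show "(\<Union>i. X i) \<in> B"
    using assms(3) by auto
  fix e :: real assume "e > 0"
  then have "eventually (\<lambda>M. \<phi> ((\<Union>i. X i) - (\<Union>i<M. X i)) < e) sequentially"
    using assms(3) by (intro order_tendstoD(2)[OF tendsto_Diff_UN_lessThan]) auto
  then obtain M where "\<phi> ((\<Union>i. X i) - (\<Union>i<M. X i)) < e"
    by (auto simp: eventually_sequentially)
  moreover have "sym_diff (\<Union>i. X i) (\<Union>i<M. X i) = (\<Union>i. X i) - (\<Union>i<M. X i)"
    by blast
  ultimately show "\<exists>Y\<in>B. approximable A Y \<and> \<phi> (sym_diff (\<Union>i. X i) Y) < e"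
    using finite_unions assms(3) by (intro bexI[of _ "\<Union>i<M. X i"]) auto
qed

lemma approximable_sigma_sets:
  assumes "algebra J A" "A \<subseteq> B" "X \<in> sigma_sets J A"
  shows "approximable A X"
  using assms(3)
proof (induction rule: sigma_sets.induct)
  case (Basic X)
  then show ?case
    by (rule approximable_self)
next
  case Empty
  have "{} \<in> A"
    using assms(1) unfolding algebra_iff_Un by simp
  then show ?case
    by (rule approximable_self)
next
  case (Compl X)
  have "A \<subseteq> Pow J"
    using assms(1) unfolding algebra_iff_Un by simp
  then have "X \<subseteq> J"
    using Compl.hyps by (rule sigma_sets_into_sp)
  then show ?case
    using approximable_Diff_space[OF assms(1)] Compl.IH by blast
next
  case (Union X)
  then show ?case
    using assms sigma_sets_subset[OF assms(2)] by (intro approximable_UN) auto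
qed

lemma eventually_approx_of_approximable:
  assumes "incseq C" "approximable (\<Union>n. C n) X" "e > 0"
  shows "eventually (\<lambda>n. \<exists>Y\<in>C n. \<phi> (sym_diff X Y) < e) sequentially"
proof -
  obtain m Y where "Y \<in> C m" "\<phi> (sym_diff X Y) < e"
    using assms(2,3) unfolding approximable_def by blast
  moreover have "Y \<in> C n" if "n \<ge> m" for n
    using monoD[OF assms(1) that] \<open>Y \<in> C m\<close> by blast
  ultimately show ?thesis
    unfolding eventually_sequentially by blast
qed

lemma abs_diff_preimage_le:
  assumes "labelling k J B F" "labelling k J B G" "A \<subseteq> {..<k}" "E \<in> B"
    and "\<And>x. x \<in> J \<Longrightarrow> x \<notin> E \<Longrightarrow> G x = F x"
  shows "\<bar>\<phi> {x\<in>J. G x \<in> A} - \<phi> {x\<in>J. F x \<in> A}\<bar> \<le> \<phi> E"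
proof -
  have GA: "{x\<in>J. G x \<in> A} \<in> B" and FA: "{x\<in>J. F x \<in> A} \<in> B"
    using assms(1-3) by (auto intro: labelling_preimage_in_sets)
  have "\<bar>\<phi> {x\<in>J. G x \<in> A} - \<phi> {x\<in>J. F x \<in> A}\<bar> \<le> \<phi> (sym_diff {x\<in>J. G x \<in> A} {x\<in>J. F x \<in> A})"
    using GA FA by (rule abs_diff_le_sym_diff)
  also have "\<dots> \<le> \<phi> E"
    using GA FA assms(4,5) by (intro mono) auto
  finally show ?thesis .
qed

lemma labelling_approx:
  assumes "algebra J C" "C \<subseteq> B" "labelling k J B F"
    and Y: "\<And>i. i < k \<Longrightarrow> Y i \<in> C"
    and close: "\<And>i. i < k \<Longrightarrow> \<phi> (sym_diff {x\<in>J. F x = i} (Y i)) \<le> \<delta>"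
  shows "\<exists>G. labelling k J C G \<and>
    (\<forall>A\<subseteq>{..<k}. \<bar>\<phi> {x\<in>J. G x \<in> A} - \<phi> {x\<in>J. F x \<in> A}\<bar> \<le> k * \<delta>)"
proof -
  interpret C: algebra J C by fact
  \<comment> \<open>Label each point by the first \<open>Y i\<close> containing it; the last label also
    catches the points lying in no \<open>Y i\<close>.\<close>
  define Y' where "Y' i = (if i = k - 1 then J else Y i)" for i
  define G where "G x = (LEAST i. x \<in> Y' i)" for x
  have "labelling k J C G"
    unfolding G_def using assms(3) Y
    by (intro C.labelling_Least) (auto simp: Y'_def labelling_def intro!: exI[of _ "k - 1"])
  then have "labelling k J B G"
    using assms(2) unfolding labelling_def by blast
  define E where "E = (\<Union>i<k. sym_diff {x\<in>J. F x = i} (Y i))"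
  have G_eq_F: "G x = F x" if "x \<in> J" "x \<notin> E" for x
  proof -
    have "F x < k"
      using assms(3) \<open>x \<in> J\<close> unfolding labelling_def by blast
    moreover have "x \<in> Y i \<longleftrightarrow> i = F x" if "i < k" for i
      using \<open>x \<in> J\<close> \<open>x \<notin> E\<close> that unfolding E_def by blast
    ultimately have "(LEAST i. i = k - 1 \<or> x \<in> Y i) = F x"
      by (rule Least_last_or_eq)
    moreover have "(\<lambda>i. x \<in> Y' i) = (\<lambda>i. i = k - 1 \<or> x \<in> Y i)"
      using \<open>x \<in> J\<close> unfolding Y'_def by auto
    ultimately show ?thesis
      unfolding G_def by simp
  qed
  have sets: "{x\<in>J. F x = i} \<in> B" "Y i \<in> B" if "i < k" for i
    using assms(2,3) Y that unfolding labelling_def by auto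
  then have "E \<in> B"
    unfolding E_def by blast
  have "\<phi> E \<le> (\<Sum>i<k. \<phi> (sym_diff {x\<in>J. F x = i} (Y i)))"
    unfolding E_def using sets by (intro finite_subadditive) auto
  also have "\<dots> \<le> k * \<delta>"
    using sum_mono[of "{..<k}", OF close] by simp
  finally have "\<bar>\<phi> {x\<in>J. G x \<in> A} - \<phi> {x\<in>J. F x \<in> A}\<bar> \<le> k * \<delta>" if "A \<subseteq> {..<k}" for A
    using abs_diff_preimage_le[OF assms(3) \<open>labelling k J B G\<close> that \<open>E \<in> B\<close> G_eq_F] by linarith
  with \<open>labelling k J C G\<close> show ?thesis
    by blast
qed

lemma Qk_bounded:
  assumes "y \<in> Qk k J B \<phi>" "A \<subseteq> {..<k}"
  shows "\<bar>y A\<bar> \<le> \<phi> J"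
proof -
  obtain F where F: "labelling k J B F" and "y = quot_point k J \<phi> F"
    using assms(1) unfolding Qk_eq_image by blast
  moreover have "{x\<in>J. F x \<in> A} \<in> B"
    using F assms(2) by (rule labelling_preimage_in_sets)
  ultimately show ?thesis
    using assms(2) nonneg le_space unfolding quot_point_def by simp
qed

lemma Qk_approx_eventually:
  assumes "incseq C" "\<And>n. algebra J (C n)" "\<And>n. C n \<subseteq> B" "sigma_sets J (\<Union>n. C n) = B"
    and "y \<in> Qk k J B \<phi>" "e > 0"
  shows "eventually (\<lambda>n. \<exists>x\<in>Qk k J (C n) \<phi>. \<forall>A\<subseteq>{..<k}. \<bar>x A - y A\<bar> \<le> e) sequentially"
proof -
  obtain F where F: "labelling k J B F" and y: "y = quot_point k J \<phi> F"
    using assms(5) unfolding Qk_eq_image by blast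
  define \<delta> where "\<delta> = e / (k + 1)"
  have "\<delta> > 0" "k * \<delta> \<le> e"
    using \<open>e > 0\<close> unfolding \<delta>_def by (simp_all add: divide_simps)
  have "approximable (\<Union>n. C n) {x\<in>J. F x = i}" if "i < k" for i
    using algebra_UN_incseq[OF assms(1,2)] assms(3,4) F that unfolding labelling_def
    by (intro approximable_sigma_sets) auto
  then have "eventually (\<lambda>n. \<forall>i\<in>{..<k}. \<exists>Y\<in>C n. \<phi> (sym_diff {x\<in>J. F x = i} Y) < \<delta>) sequentially"
    using eventually_approx_of_approximable[OF assms(1) _ \<open>\<delta> > 0\<close>]
    by (intro eventually_ball_finite) auto
  then show ?thesis
  proof (rule eventually_mono)
    fix n assume "\<forall>i\<in>{..<k}. \<exists>Y\<in>C n. \<phi> (sym_diff {x\<in>J. F x = i} Y) < \<delta>"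
    then have "\<exists>Y. \<forall>i\<in>{..<k}. Y i \<in> C n \<and> \<phi> (sym_diff {x\<in>J. F x = i} (Y i)) < \<delta>"
      by (intro bchoice) blast
    then obtain Y where "\<forall>i\<in>{..<k}. Y i \<in> C n \<and> \<phi> (sym_diff {x\<in>J. F x = i} (Y i)) < \<delta>"
      by blast
    then have "\<exists>G. labelling k J (C n) G \<and>
      (\<forall>A\<subseteq>{..<k}. \<bar>\<phi> {x\<in>J. G x \<in> A} - \<phi> {x\<in>J. F x \<in> A}\<bar> \<le> k * \<delta>)"
      by (intro labelling_approx[OF assms(2,3) F]) (auto intro: less_imp_le)
    then obtain G where "labelling k J (C n) G"
      and close: "\<forall>A\<subseteq>{..<k}. \<bar>\<phi> {x\<in>J. G x \<in> A} - \<phi> {x\<in>J. F x \<in> A}\<bar> \<le> k * \<delta>"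
      by blast
    then have "quot_point k J \<phi> G \<in> Qk k J (C n) \<phi>"
      unfolding Qk_eq_image by blast
    moreover have "\<bar>quot_point k J \<phi> G A - y A\<bar> \<le> e" if "A \<subseteq> {..<k}" for A
      using close that \<open>k * \<delta> \<le> e\<close> unfolding y quot_point_def by auto
    ultimately show "\<exists>x\<in>Qk k J (C n) \<phi>. \<forall>A\<subseteq>{..<k}. \<bar>x A - y A\<bar> \<le> e"
      by blast
  qed
qed

lemma Qk_tendsto_of_generating_subalgebras:
  assumes "incseq C" "\<And>n. algebra J (C n)" "\<And>n. C n \<subseteq> B" "sigma_sets J (\<Union>n. C n) = B"
  shows "(\<lambda>n. hausdist_k k (Qk k J (C n) \<phi>) (Qk k J B \<phi>)) \<longlonglongrightarrow> 0"
proof (rule hausdist_k_tendsto_0)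
  show "Qk k J (C n) \<phi> \<subseteq> Qk k J B \<phi>" for n
    using assms(3) by (rule Qk_mono)
  show "\<bar>y A\<bar> \<le> \<phi> J" if "y \<in> Qk k J B \<phi>" "A \<subseteq> {..<k}" for y A
    using that by (rule Qk_bounded)
  show "eventually (\<lambda>n. \<exists>x\<in>Qk k J (C n) \<phi>. \<forall>A\<subseteq>{..<k}. \<bar>x A - y A\<bar> \<le> e) sequentially"
    if "y \<in> Qk k J B \<phi>" "e > 0" for y e
    using assms that by (rule Qk_approx_eventually)
qed

end

theorem theorem4p3:
  fixes J :: "'a set" and B :: "'a set set" and \<phi> :: "'a set \<Rightarrow> real"
    and P :: "nat \<Rightarrow> 'a set set"
  assumes "sigma_algebra J B"
    and "sf_bounded B \<phi>" and "sf_increasing B \<phi>" and "sf_submodular B \<phi>"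
    and "sf_cont_above B \<phi>" and "\<phi> {} = 0"
    and "\<And>n. fin_partition J B (P n)"
    and "\<And>n. partition_refines (P (Suc n)) (P n)"
    and "sigma_sets J (\<Union>n. P n) = B"
  shows "quot_conv P (\<lambda>n. Pow (P n)) (\<lambda>n. sf_quot \<phi>) J B \<phi>"
proof -
  interpret capacity J B \<phi>
    using assms unfolding capacity_def capacity_axioms_def by blast
  have part: "\<Union>(P n) = J" "disjoint (P n)" "{} \<notin> P n" "finite (P n)" "P n \<subseteq> B" for n
    using assms(7) unfolding fin_partition_def by auto
  define C where "C n = block_unions (P n)" for n
  have alg: "algebra J (C n)" and sub: "C n \<subseteq> B" for n
    unfolding C_def using algebra_block_unions[OF part(1,2)] block_unions_subset[OF part(4,5)] .
  have "incseq C"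
    unfolding C_def using assms(8) part by (intro incseq_SucI block_unions_refines) auto
  have gen: "sigma_sets J (\<Union>n. C n) = B"
  proof
    show "sigma_sets J (\<Union>n. C n) \<subseteq> B"
      using sub by (intro sigma_sets_subset) blast
    show "B \<subseteq> sigma_sets J (\<Union>n. C n)"
      unfolding assms(9)[symmetric] C_def by (intro sigma_sets_subseteq) (auto intro: block_in_block_unions)
  qed
  show ?thesis
    unfolding quot_conv_def Qk_sf_quot[OF part(1-3)] C_def[symmetric]
    using Qk_tendsto_of_generating_subalgebras[OF \<open>incseq C\<close> alg sub gen] by blast
qed

end
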